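(* If there is a derivation in system $\mathcal L$ of $\Gamma\vdash M$, then there is a derivation in $\mathcal L$ of the same sequent whose length is at most $|St(\Gamma\cup\{M\})|$ (the cardinality of $St(\Gamma\cup\{M\})$).
   Context: Fix names, variables and constructors $\mathsf{pub}$ (unary), $\mathsf{sign},\mathsf{blind},\langle\cdot,\cdot\rangle,\{\cdot\}_\cdot$ (binary). $E$ is an equational theory with signature $\Sigma_E$ disjoint from the constructors, with at most one associative-commutative (AC) binary symbol $\oplus$, presented by a rewrite system $R_E$ terminating and confluent modulo AC. Terms are ground terms over names, the constructors and $\Sigma_E$. $\equiv$ is equality modulo AC, $\approx_E$ equality modulo $E$. Guarded term: a name, a variable, or headed by a constructor. $E$-context: term with holes built only from symbols of $\Sigma_E$. Sequents $\Gamma\vdash M$ have all terms in normal form; $\Gamma,M$ means $\Gamma\cup\{M\}$. $\Gamma\Vdash_{\mathcal R}M$ means $\Gamma\vdash M$ is derivable using only: (id) $\Gamma\vdash M$ if $M\approx_E C[M_1,\dots,M_k]$ for an $E$-context $C$ and $M_i\in\Gamma$; and the right rules: from $\Gamma\vdash M$ and $\Gamma\vdash N$ infer $\Gamma\vdash\langle M,N\rangle$; from $\Gamma\vdash M$ and $\Gamma\vdash K$ infer $\Gamma\vdash\{M\}_K$, resp. $\Gamma\vdash\mathsf{sign}(M,K)$, resp. $\Gamma\vdash\mathsf{blind}(M,K)$. System $\mathcal L$ (all rules except $r$ have a single premise, so derivations are linear sequences of sequents): ($r$) $\Gamma\vdash M$ with no premise if $\Gamma\Vdash_{\mathcal R}M$;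 ($lp$) from $\Gamma,\langle M,N\rangle,M,N\vdash T$ infer $\Gamma,\langle M,N\rangle\vdash T$; ($le$) from $\Gamma,\{M\}_K,M,K\vdash N$ infer $\Gamma,\{M\}_K\vdash N$ if $\Gamma,\{M\}_K\Vdash_{\mathcal R}K$; ($\mathsf{sign}$) from $\Gamma,\mathsf{sign}(M,K),\mathsf{pub}(L),M\vdash N$ infer $\Gamma,\mathsf{sign}(M,K),\mathsf{pub}(L)\vdash N$ if $K\equiv L$; ($\mathsf{blind}_1$) from $\Gamma,\mathsf{blind}(M,K),M,K\vdash N$ infer $\Gamma,\mathsf{blind}(M,K)\vdash N$ if $\Gamma,\mathsf{blind}(M,K)\Vdash_{\mathcal R}K$; ($\mathsf{blind}_2$) from $\Gamma,\mathsf{sign}(\mathsf{blind}(M,R),K),\mathsf{sign}(M,K),R\vdash N$ infer $\Gamma,\mathsf{sign}(\mathsf{blind}(M,R),K)\vdash N$ if $\Gamma,\mathsf{sign}(\mathsf{blind}(M,R),K)\Vdash_{\mathcal R}R$; ($ls$) from $\Gamma,A\vdash M$ infer $\Gamma\vdash M$ if $A$ is a guarded subterm of a term in $\Gamma\cup\{M\}$ and $\Gamma\Vdash_{\mathcal R}A$. The length of a derivation is the number of rule applications on its (single) branch. For a set of terms $\Delta$: $pst(\Delta)$ is the set of proper subterms of terms in $\Delta$; $sst(\Delta)=\{\mathsf{sign}(M,N)\mid M,N\in pst(\Delta)\}$; $St(\Delta)=\Delta\cup pst(\Delta)\cup sst(\Delta)$. *)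

theory Defs
  imports Main
begin

text \<open>Terms over names 'n, E-symbols 'f (signature Sigma_E) and variables 'v.\<close>

datatype ('n, 'f, 'v) trm =
    Var 'v
  | Nm 'n
  | Pub "('n, 'f, 'v) trm"
  | Sign "('n, 'f, 'v) trm" "('n, 'f, 'v) trm"
  | Blind "('n, 'f, 'v) trm" "('n, 'f, 'v) trm"
  | Pair "('n, 'f, 'v) trm" "('n, 'f, 'v) trm"
  | Enc "('n, 'f, 'v) trm" "('n, 'f, 'v) trm"   \<comment> \<open>Enc M K = {M}_K\<close>
  | Fn 'f "('n, 'f, 'v) trm list"

fun vars :: "('n, 'f, 'v) trm \<Rightarrow> 'v set" where
  "vars (Var x) = {x}"
| "vars (Nm a) = {}"
| "vars (Pub t) = vars t"
| "vars (Sign s t) = vars s \<union> vars t"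
| "vars (Blind s t) = vars s \<union> vars t"
| "vars (Pair s t) = vars s \<union> vars t"
| "vars (Enc s t) = vars s \<union> vars t"
| "vars (Fn f ts) = (\<Union>t\<in>set ts. vars t)"

definition ground :: "('n, 'f, 'v) trm \<Rightarrow> bool" where
  "ground t \<longleftrightarrow> vars t = {}"

fun wf_trm :: "('f \<Rightarrow> nat) \<Rightarrow> ('n, 'f, 'v) trm \<Rightarrow> bool" where
  "wf_trm ar (Var x) = True"
| "wf_trm ar (Nm a) = True"
| "wf_trm ar (Pub t) = wf_trm ar t"
| "wf_trm ar (Sign s t) = (wf_trm ar s \<and> wf_trm ar t)"
| "wf_trm ar (Blind s t) = (wf_trm ar s \<and> wf_trm ar t)"
| "wf_trm ar (Pair s t) = (wf_trm ar s \<and> wf_trm ar t)"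
| "wf_trm ar (Enc s t) = (wf_trm ar s \<and> wf_trm ar t)"
| "wf_trm ar (Fn f ts) = (length ts = ar f \<and> (\<forall>t\<in>set ts. wf_trm ar t))"

fun eterm :: "('n, 'f, 'v) trm \<Rightarrow> bool" where
  "eterm (Var x) = True"
| "eterm (Fn f ts) = (\<forall>t\<in>set ts. eterm t)"
| "eterm _ = False"

fun subst :: "('v \<Rightarrow> ('n, 'f, 'v) trm) \<Rightarrow> ('n, 'f, 'v) trm \<Rightarrow> ('n, 'f, 'v) trm" where
  "subst \<sigma> (Var x) = \<sigma> x"
| "subst \<sigma> (Nm a) = Nm a"
| "subst \<sigma> (Pub t) = Pub (subst \<sigma> t)"
| "subst \<sigma> (Sign s t) = Sign (subst \<sigma> s) (subst \<sigma> t)"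
| "subst \<sigma> (Blind s t) = Blind (subst \<sigma> s) (subst \<sigma> t)"
| "subst \<sigma> (Pair s t) = Pair (subst \<sigma> s) (subst \<sigma> t)"
| "subst \<sigma> (Enc s t) = Enc (subst \<sigma> s) (subst \<sigma> t)"
| "subst \<sigma> (Fn f ts) = Fn f (map (subst \<sigma>) ts)"

fun subterms :: "('n, 'f, 'v) trm \<Rightarrow> ('n, 'f, 'v) trm set" where
  "subterms (Var x) = {Var x}"
| "subterms (Nm a) = {Nm a}"
| "subterms (Pub t) = insert (Pub t) (subterms t)"
| "subterms (Sign s t) = insert (Sign s t) (subterms s \<union> subterms t)"
| "subterms (Blind s t) = insert (Blind s t) (subterms s \<union> subterms t)"
| "subterms (Pair s t) = insert (Pair s t) (subterms s \<union> subterms t)"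
| "subterms (Enc s t) = insert (Enc s t) (subterms s \<union> subterms t)"
| "subterms (Fn f ts) = insert (Fn f ts) (\<Union>t\<in>set ts. subterms t)"

definition psubterms :: "('n, 'f, 'v) trm \<Rightarrow> ('n, 'f, 'v) trm set" where
  "psubterms t = subterms t - {t}"

fun guarded :: "('n, 'f, 'v) trm \<Rightarrow> bool" where
  "guarded (Fn f ts) = False"
| "guarded _ = True"

inductive acEq :: "'f option \<Rightarrow> ('n, 'f, 'v) trm \<Rightarrow> ('n, 'f, 'v) trm \<Rightarrow> bool"
  for ac :: "'f option" where
  ac_refl: "acEq ac t t"
| ac_sym: "acEq ac s t \<Longrightarrow> acEq ac t s"
| ac_trans: "acEq ac s t \<Longrightarrow> acEq ac t u \<Longrightarrow> acEq ac s u"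
| ac_assoc: "ac = Some p \<Longrightarrow> acEq ac (Fn p [Fn p [a, b], c]) (Fn p [a, Fn p [b, c]])"
| ac_comm: "ac = Some p \<Longrightarrow> acEq ac (Fn p [a, b]) (Fn p [b, a])"
| ac_Pub: "acEq ac s t \<Longrightarrow> acEq ac (Pub s) (Pub t)"
| ac_Sign: "acEq ac s s' \<Longrightarrow> acEq ac t t' \<Longrightarrow> acEq ac (Sign s t) (Sign s' t')"
| ac_Blind: "acEq ac s s' \<Longrightarrow> acEq ac t t' \<Longrightarrow> acEq ac (Blind s t) (Blind s' t')"
| ac_Pair: "acEq ac s s' \<Longrightarrow> acEq ac t t' \<Longrightarrow> acEq ac (Pair s t) (Pair s' t')"
| ac_Enc: "acEq ac s s' \<Longrightarrow> acEq ac t t' \<Longrightarrow> acEq ac (Enc s t) (Enc s' t')"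
| ac_Fn: "list_all2 (acEq ac) ts us \<Longrightarrow> acEq ac (Fn f ts) (Fn f us)"

inductive rstep :: "(('n, 'f, 'v) trm \<times> ('n, 'f, 'v) trm) set
    \<Rightarrow> ('n, 'f, 'v) trm \<Rightarrow> ('n, 'f, 'v) trm \<Rightarrow> bool"
  for R where
  rs_root: "(l, r) \<in> R \<Longrightarrow> rstep R (subst \<sigma> l) (subst \<sigma> r)"
| rs_Pub: "rstep R s t \<Longrightarrow> rstep R (Pub s) (Pub t)"
| rs_Sign1: "rstep R s t \<Longrightarrow> rstep R (Sign s u) (Sign t u)"
| rs_Sign2: "rstep R s t \<Longrightarrow> rstep R (Sign u s) (Sign u t)"
| rs_Blind1: "rstep R s t \<Longrightarrow> rstep R (Blind s u) (Blind t u)"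
| rs_Blind2: "rstep R s t \<Longrightarrow> rstep R (Blind u s) (Blind u t)"
| rs_Pair1: "rstep R s t \<Longrightarrow> rstep R (Pair s u) (Pair t u)"
| rs_Pair2: "rstep R s t \<Longrightarrow> rstep R (Pair u s) (Pair u t)"
| rs_Enc1: "rstep R s t \<Longrightarrow> rstep R (Enc s u) (Enc t u)"
| rs_Enc2: "rstep R s t \<Longrightarrow> rstep R (Enc u s) (Enc u t)"
| rs_Fn: "rstep R s t \<Longrightarrow> rstep R (Fn f (xs @ s # ys)) (Fn f (xs @ t # ys))"

definition rstepAC where
  "rstepAC ac R s t \<longleftrightarrow> (\<exists>s' t'. acEq ac s s' \<and> rstep R s' t' \<and> acEq ac t' t)"

definition is_nf where
  "is_nf ac R t \<longleftrightarrow> \<not> (\<exists>u. rstepAC ac R t u)"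

definition eqE where
  "eqE ac R = (\<lambda>s t. rstep R s t \<or> rstep R t s \<or> acEq ac s t)\<^sup>*\<^sup>*"

text \<open>Standing assumptions on E: at most one AC symbol (of arity 2); R_E is a
  rewrite system over Sigma_E, terminating and confluent modulo AC
  (confluence modulo AC stated as the Church-Rosser property modulo AC).\<close>
definition theory_ok ::
  "('f \<Rightarrow> nat) \<Rightarrow> 'f option \<Rightarrow> (('n, 'f, 'v) trm \<times> ('n, 'f, 'v) trm) set \<Rightarrow> bool" where
  "theory_ok ar ac R \<longleftrightarrow>
     (\<forall>p. ac = Some p \<longrightarrow> ar p = 2) \<and>
     (\<forall>(l, r)\<in>R. eterm l \<and> eterm r \<and> wf_trm ar l \<and> wf_trm ar r \<and>
                 (\<forall>x. l \<noteq> Var x) \<and> vars r \<subseteq> vars l) \<and>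
     wfP (\<lambda>t s. rstepAC ac R s t) \<and>
     (\<forall>s t. eqE ac R s t \<longrightarrow>
        (\<exists>s' t'. (rstepAC ac R)\<^sup>*\<^sup>* s s' \<and> (rstepAC ac R)\<^sup>*\<^sup>* t t' \<and> acEq ac s' t'))"

definition ok_trm where
  "ok_trm ar ac R t \<longleftrightarrow> ground t \<and> wf_trm ar t \<and> is_nf ac R t"

definition ok_seq where
  "ok_seq ar ac R \<Gamma> M \<longleftrightarrow> (\<forall>t\<in>insert M \<Gamma>. ok_trm ar ac R t)"

text \<open>Terms C[M_1,...,M_k] for an E-context C (built only from Sigma_E symbols)
  and M_i in Gamma.\<close>
inductive ectx_inst :: "('f \<Rightarrow> nat) \<Rightarrow> ('n, 'f, 'v) trm set \<Rightarrow> ('n, 'f, 'v) trm \<Rightarrow> bool"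
  for ar \<Gamma> where
  ec_hole: "t \<in> \<Gamma> \<Longrightarrow> ectx_inst ar \<Gamma> t"
| ec_fn: "length ts = ar f \<Longrightarrow> \<forall>t\<in>set ts. ectx_inst ar \<Gamma> t \<Longrightarrow> ectx_inst ar \<Gamma> (Fn f ts)"

inductive rder :: "('f \<Rightarrow> nat) \<Rightarrow> 'f option \<Rightarrow> (('n, 'f, 'v) trm \<times> ('n, 'f, 'v) trm) set
    \<Rightarrow> ('n, 'f, 'v) trm set \<Rightarrow> ('n, 'f, 'v) trm \<Rightarrow> bool"
  for ar ac R where
  r_id: "ectx_inst ar \<Gamma> C \<Longrightarrow> eqE ac R M C \<Longrightarrow> rder ar ac R \<Gamma> M"
| r_pair: "rder ar ac R \<Gamma> M \<Longrightarrow> rder ar ac R \<Gamma> N \<Longrightarrow> rder ar ac R \<Gamma> (Pair M N)"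
| r_enc: "rder ar ac R \<Gamma> M \<Longrightarrow> rder ar ac R \<Gamma> K \<Longrightarrow> rder ar ac R \<Gamma> (Enc M K)"
| r_sign: "rder ar ac R \<Gamma> M \<Longrightarrow> rder ar ac R \<Gamma> K \<Longrightarrow> rder ar ac R \<Gamma> (Sign M K)"
| r_blind: "rder ar ac R \<Gamma> M \<Longrightarrow> rder ar ac R \<Gamma> K \<Longrightarrow> rder ar ac R \<Gamma> (Blind M K)"

section \<open>System L; lder ar ac R Gamma M n: a derivation of Gamma |- M of length n\<close>

inductive lder :: "('f \<Rightarrow> nat) \<Rightarrow> 'f option \<Rightarrow> (('n, 'f, 'v) trm \<times> ('n, 'f, 'v) trm) set
    \<Rightarrow> ('n, 'f, 'v) trm set \<Rightarrow> ('n, 'f, 'v) trm \<Rightarrow> nat \<Rightarrow> bool"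
  for ar ac R where
  l_r: "ok_seq ar ac R \<Gamma> M \<Longrightarrow> rder ar ac R \<Gamma> M \<Longrightarrow> lder ar ac R \<Gamma> M 1"
| l_lp: "ok_seq ar ac R \<Gamma> T \<Longrightarrow> Pair M N \<in> \<Gamma> \<Longrightarrow>
         lder ar ac R (\<Gamma> \<union> {M, N}) T n \<Longrightarrow> lder ar ac R \<Gamma> T (Suc n)"
| l_le: "ok_seq ar ac R \<Gamma> N \<Longrightarrow> Enc M K \<in> \<Gamma> \<Longrightarrow> rder ar ac R \<Gamma> K \<Longrightarrow>
         lder ar ac R (\<Gamma> \<union> {M, K}) N n \<Longrightarrow> lder ar ac R \<Gamma> N (Suc n)"
| l_sign: "ok_seq ar ac R \<Gamma> N \<Longrightarrow> Sign M K \<in> \<Gamma> \<Longrightarrow> Pub L \<in> \<Gamma> \<Longrightarrow> acEq ac K L \<Longrightarrow>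
         lder ar ac R (\<Gamma> \<union> {M}) N n \<Longrightarrow> lder ar ac R \<Gamma> N (Suc n)"
| l_blind1: "ok_seq ar ac R \<Gamma> N \<Longrightarrow> Blind M K \<in> \<Gamma> \<Longrightarrow> rder ar ac R \<Gamma> K \<Longrightarrow>
         lder ar ac R (\<Gamma> \<union> {M, K}) N n \<Longrightarrow> lder ar ac R \<Gamma> N (Suc n)"
| l_blind2: "ok_seq ar ac R \<Gamma> N \<Longrightarrow> Sign (Blind M Rb) K \<in> \<Gamma> \<Longrightarrow> rder ar ac R \<Gamma> Rb \<Longrightarrow>
         lder ar ac R (\<Gamma> \<union> {Sign M K, Rb}) N n \<Longrightarrow> lder ar ac R \<Gamma> N (Suc n)"
| l_ls: "ok_seq ar ac R \<Gamma> M \<Longrightarrow> guarded A \<Longrightarrow> A \<in> (\<Union>t\<in>insert M \<Gamma>. subterms t) \<Longrightarrow>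
         rder ar ac R \<Gamma> A \<Longrightarrow> lder ar ac R (insert A \<Gamma>) M n \<Longrightarrow> lder ar ac R \<Gamma> M (Suc n)"

definition pst :: "('n, 'f, 'v) trm set \<Rightarrow> ('n, 'f, 'v) trm set" where
  "pst \<Delta> = (\<Union>t\<in>\<Delta>. psubterms t)"

definition sst :: "('n, 'f, 'v) trm set \<Rightarrow> ('n, 'f, 'v) trm set" where
  "sst \<Delta> = {Sign M N | M N. M \<in> pst \<Delta> \<and> N \<in> pst \<Delta>}"

definition St :: "('n, 'f, 'v) trm set \<Rightarrow> ('n, 'f, 'v) trm set" where
  "St \<Delta> = \<Delta> \<union> pst \<Delta> \<union> sst \<Delta>"

end

theory Submission
  imports Defs
begin

text \<open>Every rule of \<open>\<L>\<close> other than \<open>r\<close> only enlarges the hypotheses, its side conditions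
  do not depend on the rest of the derivation, and the terms it adds lie in
  \<open>St(\<Gamma> \<union> {M})\<close>, a finite set closed under \<open>St\<close>. A step adding nothing new can be
  dropped, so a derivation can be rebuilt in which every step strictly enlarges \<open>\<Gamma>\<close>
  inside \<open>St(\<Gamma> \<union> {M})\<close>: at most \<open>|St(\<Gamma> \<union> {M}) - \<Gamma>|\<close> such steps plus the closing
  \<open>r\<close>, which fits into \<open>|St(\<Gamma> \<union> {M})|\<close> when \<open>\<Gamma> \<noteq> {}\<close>. For \<open>\<Gamma> = {}\<close> the goal is no
  proper subterm of anything in \<open>St {M}\<close>, so it enters the hypotheses only as a
  right-derivable term or as a signature over \<open>pst \<Gamma>\<close>; either way the closing step is
  paid for by the goal itself.\<close>

lemma subterms_refl [simp]: "t \<in> subterms t"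
  by (cases t) auto

lemma subterms_trans: "u \<in> subterms s \<Longrightarrow> s \<in> subterms t \<Longrightarrow> u \<in> subterms t"
  by (induction t) auto

lemma finite_subterms: "finite (subterms t)"
  by (induction t) auto

lemma size_Fn_arg: "t \<in> set ts \<Longrightarrow> size t < size (Fn f ts)"
  by (induction ts) auto

lemma size_subterms_le: "s \<in> subterms t \<Longrightarrow> size s \<le> size t"
proof (induction t)
  case (Fn f ts)
  then show ?case using size_Fn_arg[of _ ts f] by fastforce
qed auto

lemma psubterms_simps [simp]:
  "psubterms (Var x) = {}"
  "psubterms (Nm a) = {}"
  "psubterms (Pub t) = subterms t"
  "psubterms (Sign s t) = subterms s \<union> subterms t"
  "psubterms (Blind s t) = subterms s \<union> subterms t"
  "psubterms (Pair s t) = subterms s \<union> subterms t"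
  "psubterms (Enc s t) = subterms s \<union> subterms t"
  "psubterms (Fn f ts) = (\<Union>t\<in>set ts. subterms t)"
proof -
  show "psubterms (Fn f ts) = (\<Union>t\<in>set ts. subterms t)"
    unfolding psubterms_def using size_subterms_le size_Fn_arg[of _ ts f] by fastforce
qed (auto simp: psubterms_def dest: size_subterms_le)

lemma size_psubterms_less: "s \<in> psubterms t \<Longrightarrow> size s < size t"
  by (cases t) (auto dest!: size_subterms_le dest: size_Fn_arg[of _ _ f for f])

lemma psubterms_subterms_trans:
  assumes "u \<in> subterms s" and "s \<in> psubterms t"
  shows "u \<in> psubterms t"
proof -
  have "u \<in> subterms t"
    using assms subterms_trans unfolding psubterms_def by blast
  moreover have "size u < size t"
    using size_subterms_le [OF assms(1)] size_psubterms_less [OF assms(2)] by linarith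
  ultimately show ?thesis
    unfolding psubterms_def by blast
qed

lemma pst_subterms_closed: "u \<in> subterms s \<Longrightarrow> s \<in> pst \<Delta> \<Longrightarrow> u \<in> pst \<Delta>"
  unfolding pst_def using psubterms_subterms_trans by blast

lemma pst_mono: "\<Delta> \<subseteq> \<Delta>' \<Longrightarrow> pst \<Delta> \<subseteq> pst \<Delta>'"
  unfolding pst_def by blast

lemma St_mono: "\<Delta> \<subseteq> \<Delta>' \<Longrightarrow> St \<Delta> \<subseteq> St \<Delta>'"
  unfolding St_def sst_def using pst_mono by blast

lemma subset_St: "\<Delta> \<subseteq> St \<Delta>"
  unfolding St_def by blast

lemma subterms_subset_St: "t \<in> \<Delta> \<Longrightarrow> subterms t \<subseteq> St \<Delta>"
  unfolding St_def pst_def psubterms_def by blast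

lemma pst_St: "pst (St \<Delta>) = pst \<Delta>"
proof
  show "pst (St \<Delta>) \<subseteq> pst \<Delta>"
  proof
    fix u assume "u \<in> pst (St \<Delta>)"
    then obtain t where t: "t \<in> St \<Delta>" "u \<in> psubterms t"
      by (auto simp: pst_def)
    from t(1) consider "t \<in> \<Delta>" | "t \<in> pst \<Delta>" | a b where "t = Sign a b" "a \<in> pst \<Delta>" "b \<in> pst \<Delta>"
      by (auto simp: St_def sst_def)
    then show "u \<in> pst \<Delta>"
    proof cases
      case 1
      with t(2) show ?thesis by (auto simp: pst_def)
    next
      case 2
      with t(2) show ?thesis
        using pst_subterms_closed[of u t] by (simp add: psubterms_def)
    next
      case 3
      with t(2) show ?thesis
        using pst_subterms_closed[of u a] pst_subterms_closed[of u b] by auto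
    qed
  qed
  show "pst \<Delta> \<subseteq> pst (St \<Delta>)"
    by (rule pst_mono [OF subset_St])
qed

lemma St_St: "St (St \<Delta>) = St \<Delta>"
proof -
  have "sst (St \<Delta>) = sst \<Delta>"
    unfolding sst_def pst_St ..
  then show ?thesis
    unfolding St_def [of "St \<Delta>"] pst_St by (auto simp: St_def)
qed

lemma St_subset_St: "\<Delta>' \<subseteq> St \<Delta> \<Longrightarrow> St \<Delta>' \<subseteq> St \<Delta>"
  using St_mono [of \<Delta>' "St \<Delta>"] by (simp add: St_St)

lemma finite_St: "finite \<Delta> \<Longrightarrow> finite (St \<Delta>)"
proof -
  assume fin: "finite \<Delta>"
  have "pst \<Delta> \<subseteq> (\<Union>t\<in>\<Delta>. subterms t)"
    by (auto simp: pst_def psubterms_def)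
  moreover have "finite (\<Union>t\<in>\<Delta>. subterms t)"
    using fin by (simp add: finite_subterms)
  ultimately have fin_pst: "finite (pst \<Delta>)"
    by (rule finite_subset)
  have "sst \<Delta> = (\<lambda>(a, b). Sign a b) ` (pst \<Delta> \<times> pst \<Delta>)"
    by (auto simp: sst_def)
  then have "finite (sst \<Delta>)"
    using fin_pst by simp
  with fin fin_pst show ?thesis
    by (simp add: St_def)
qed

lemma card_Diff_Un_less:
  "finite S \<Longrightarrow> X \<subseteq> S \<Longrightarrow> \<not> X \<subseteq> \<Gamma> \<Longrightarrow> card (S - (\<Gamma> \<union> X)) < card (S - \<Gamma>)"
  by (rule psubset_card_mono) auto

context
  fixes ar :: "'f \<Rightarrow> nat" and ac :: "'f option"
    and R :: "(('n, 'f, 'v) trm \<times> ('n, 'f, 'v) trm) set"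
begin

lemma lder_ok_seq: "lder ar ac R \<Gamma> M n \<Longrightarrow> ok_seq ar ac R \<Gamma> M"
  by (cases rule: lder.cases) auto

lemma rder_mem: "M \<in> \<Gamma> \<Longrightarrow> rder ar ac R \<Gamma> M"
  by (rule r_id [where C = M]) (auto intro: ec_hole simp: eqE_def)

lemma lder_mem: "ok_seq ar ac R \<Gamma> M \<Longrightarrow> M \<in> \<Gamma> \<Longrightarrow> lder ar ac R \<Gamma> M 1"
  by (rule l_r) (auto intro: rder_mem)

lemma rder_sst: "pst \<Gamma> \<subseteq> \<Gamma> \<Longrightarrow> t \<in> sst \<Gamma> \<Longrightarrow> rder ar ac R \<Gamma> t"
  unfolding sst_def by (blast intro: r_sign rder_mem)

lemma lder_first_stepE [consumes 1, case_names axiom step]: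
  assumes "lder ar ac R \<Gamma> M n"
  obtains (axiom) "n = 1" "rder ar ac R \<Gamma> M"
  | (step) X k where "n = Suc k" "lder ar ac R (\<Gamma> \<union> X) M k"
      "\<And>k'. lder ar ac R (\<Gamma> \<union> X) M k' \<Longrightarrow> lder ar ac R \<Gamma> M (Suc k')"
      "X \<subseteq> St (insert M \<Gamma>)"
      "\<And>x. x \<in> X \<Longrightarrow> x \<in> pst \<Gamma> \<union> sst \<Gamma> \<or> rder ar ac R \<Gamma> x"
proof -
  have St_insert: "pst \<Gamma> \<union> sst \<Gamma> \<subseteq> St (insert M \<Gamma>)"
    using St_mono [of \<Gamma> "insert M \<Gamma>"] by (auto simp: St_def)
  have decompose: thesis
    if "n = Suc k" "lder ar ac R (\<Gamma> \<union> X) M k"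
      "\<And>k'. lder ar ac R (\<Gamma> \<union> X) M k' \<Longrightarrow> lder ar ac R \<Gamma> M (Suc k')"
      "X \<subseteq> pst \<Gamma> \<union> sst \<Gamma>" for X k
    using that St_insert by (intro step [of k X]) auto
  have in_pst: "u \<in> pst \<Gamma>" if "t \<in> \<Gamma>" "u \<in> psubterms t" for t u
    using that by (auto simp: pst_def)
  from assms show thesis
  proof cases
    case l_r
    then show thesis using axiom by blast
  next
    case (l_lp a b k)
    then have "{a, b} \<subseteq> pst \<Gamma>"
      using in_pst by fastforce
    with l_lp show thesis
      using lder.l_lp [OF l_lp(2,3)] by (intro decompose [of k "{a, b}"]) auto
  next
    case (l_le a K k)
    then have "{a, K} \<subseteq> pst \<Gamma>"
      using in_pst by fastforce
    with l_le show thesis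
      using lder.l_le [OF l_le(2-4)] by (intro decompose [of k "{a, K}"]) auto
  next
    case (l_sign a K L k)
    then have "{a} \<subseteq> pst \<Gamma>"
      using in_pst by fastforce
    with l_sign show thesis
      using lder.l_sign [OF l_sign(2-5)] by (intro decompose [of k "{a}"]) auto
  next
    case (l_blind1 a K k)
    then have "{a, K} \<subseteq> pst \<Gamma>"
      using in_pst by fastforce
    with l_blind1 show thesis
      using lder.l_blind1 [OF l_blind1(2-4)] by (intro decompose [of k "{a, K}"]) auto
  next
    case (l_blind2 a Rb K k)
    then have "a \<in> pst \<Gamma>" "K \<in> pst \<Gamma>" "Rb \<in> pst \<Gamma>"
      using in_pst by fastforce+
    then have "{Sign a K, Rb} \<subseteq> pst \<Gamma> \<union> sst \<Gamma>"
      by (auto simp: sst_def)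
    with l_blind2 show thesis
      using lder.l_blind2 [OF l_blind2(2-4)] by (intro decompose [of k "{Sign a K, Rb}"]) auto
  next
    case (l_ls A k)
    have "A \<in> St (insert M \<Gamma>)"
      using l_ls(4) subterms_subset_St by blast
    with l_ls show thesis
      using lder.l_ls [OF l_ls(2-5)] by (intro step [of k "{A}"]) auto
  qed
qed

lemma lder_bound_step:
  assumes "finite S" and "X \<subseteq> S"
    and "lder ar ac R (\<Gamma> \<union> X) M m" and "m \<le> card (S - (\<Gamma> \<union> X)) + c"
    and "\<And>k. lder ar ac R (\<Gamma> \<union> X) M k \<Longrightarrow> lder ar ac R \<Gamma> M (Suc k)"
  shows "\<exists>m. lder ar ac R \<Gamma> M m \<and> m \<le> card (S - \<Gamma>) + c"
proof (cases "X \<subseteq> \<Gamma>")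
  case True
  then show ?thesis
    using assms(3,4) by (auto simp: Un_absorb2)
next
  case False
  then have "card (S - (\<Gamma> \<union> X)) < card (S - \<Gamma>)"
    using card_Diff_Un_less assms(1,2) by blast
  then show ?thesis
    using assms(3-5) by (intro exI [of _ "Suc m"]) auto
qed

lemma lder_length_le_card_St_Diff:
  assumes "lder ar ac R \<Gamma> M n" and "finite \<Delta>" and "insert M \<Gamma> \<subseteq> St \<Delta>"
  shows "\<exists>m. lder ar ac R \<Gamma> M m \<and> m \<le> card (St \<Delta> - \<Gamma>) + 1"
  using assms(1,3)
proof (induction n arbitrary: \<Gamma> rule: less_induct)
  case (less n)
  from less.prems(1) show ?case
  proof (cases rule: lder_first_stepE)
    case axiom
    then show ?thesis
      using less.prems(1) by auto
  next
    case (step X k)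
    have X_St: "X \<subseteq> St \<Delta>"
      using step(4) St_subset_St [OF less.prems(2)] by blast
    with step less.prems(2) obtain m where
      "lder ar ac R (\<Gamma> \<union> X) M m" "m \<le> card (St \<Delta> - (\<Gamma> \<union> X)) + 1"
      using less.IH [of k "\<Gamma> \<union> X"] by auto
    then show ?thesis
      using lder_bound_step [OF finite_St [OF assms(2)] X_St] step(3) by blast
  qed
qed

lemma lder_two_steps_le_card_Diff:
  assumes "finite S" and "M \<in> S - \<Gamma>" and "pst \<Gamma> \<subseteq> S" and "M \<notin> pst \<Gamma>"
    and "ok_seq ar ac R \<Gamma> M" and "lder ar ac R \<Gamma> M 2"
    and "M \<in> pst \<Gamma> \<union> sst \<Gamma> \<or> rder ar ac R \<Gamma> M"
  shows "\<exists>m. lder ar ac R \<Gamma> M m \<and> m \<le> card (S - \<Gamma>)"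
proof (cases "rder ar ac R \<Gamma> M")
  case True
  have "1 \<le> card (S - \<Gamma>)"
    using assms(1,2) card_gt_0_iff [of "S - \<Gamma>"] by (metis One_nat_def Suc_leI empty_iff finite_Diff)
  with True show ?thesis
    using l_r [OF assms(5)] by blast
next
  case False
  \<comment> \<open>Then \<open>pst \<Gamma> \<subseteq> \<Gamma>\<close> fails, which yields a second new term besides the goal.\<close>
  with assms(4,7) have "M \<in> sst \<Gamma>"
    by blast
  with False have "\<not> pst \<Gamma> \<subseteq> \<Gamma>"
    by (metis rder_sst)
  then obtain y where "y \<in> pst \<Gamma>" "y \<notin> \<Gamma>"
    by blast
  with assms(2-4) have "{M, y} \<subseteq> S - \<Gamma>" "y \<noteq> M"
    by auto
  then have "2 \<le> card (S - \<Gamma>)"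
    using card_mono [of "S - \<Gamma>" "{M, y}"] assms(1) by simp
  with assms(6) show ?thesis
    by blast
qed

lemma lder_length_le_card_St_Diff_fresh:
  assumes "lder ar ac R \<Gamma> M n" and "finite \<Delta>" and "insert M \<Gamma> \<subseteq> St \<Delta>"
    and "M \<notin> \<Gamma>" and "M \<notin> pst \<Delta>"
  shows "\<exists>m. lder ar ac R \<Gamma> M m \<and> m \<le> card (St \<Delta> - \<Gamma>)"
  using assms(1,3,4)
proof (induction n arbitrary: \<Gamma> rule: less_induct)
  case (less n)
  have M_new: "M \<in> St \<Delta> - \<Gamma>"
    using less.prems(2,3) by blast
  from less.prems(1) show ?case
  proof (cases rule: lder_first_stepE)
    case axiom
    have "1 \<le> card (St \<Delta> - \<Gamma>)"
      using M_new finite_St [OF assms(2)] card_gt_0_iff [of "St \<Delta> - \<Gamma>"]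
      by (metis One_nat_def Suc_leI empty_iff finite_Diff)
    with axiom show ?thesis
      using less.prems(1) by auto
  next
    case (step X k)
    have X_St: "X \<subseteq> St \<Delta>"
      using step(4) St_subset_St [OF less.prems(2)] by blast
    show ?thesis
    proof (cases "M \<in> X")
      case False
      with X_St step less.prems(2,3) obtain m where
        "lder ar ac R (\<Gamma> \<union> X) M m" "m \<le> card (St \<Delta> - (\<Gamma> \<union> X))"
        using less.IH [of k "\<Gamma> \<union> X"] by auto
      then show ?thesis
        using lder_bound_step [OF finite_St [OF assms(2)] X_St _ _ step(3), where c = 0] by simp
    next
      case True
      have "pst \<Gamma> \<subseteq> pst \<Delta>"
        using pst_mono [of \<Gamma> "St \<Delta>"] less.prems(2) by (simp add: pst_St)
      with assms(5) have "M \<notin> pst \<Gamma>" "pst \<Gamma> \<subseteq> St \<Delta>"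
        by (auto simp: St_def)
      moreover have "lder ar ac R \<Gamma> M 2"
        using step(3) lder_mem [OF lder_ok_seq [OF step(2)]] True
        by (simp add: numeral_2_eq_2)
      ultimately show ?thesis
        using lder_two_steps_le_card_Diff [OF finite_St [OF assms(2)] M_new]
          lder_ok_seq [OF less.prems(1)] step(5) [OF True] by blast
    qed
  qed
qed

end

theorem lemma6:
  fixes ar :: "'f \<Rightarrow> nat" and ac :: "'f option"
    and R :: "(('n, 'f, 'v) trm \<times> ('n, 'f, 'v) trm) set"
    and \<Gamma> :: "('n, 'f, 'v) trm set" and M :: "('n, 'f, 'v) trm"
  assumes "theory_ok ar ac R"
    and "finite \<Gamma>"
    and "lder ar ac R \<Gamma> M n"
  shows "\<exists>m. lder ar ac R \<Gamma> M m \<and> m \<le> card (St (insert M \<Gamma>))"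
proof (cases "\<Gamma> = {}")
  case True
  have "M \<notin> pst {M}"
    using size_psubterms_less by (fastforce simp: pst_def)
  then show ?thesis
    using lder_length_le_card_St_Diff_fresh [of ar ac R \<Gamma> M n "{M}"] assms(3) True
    by (simp add: St_def)
next
  case False
  let ?S = "St (insert M \<Gamma>)"
  have fin: "finite (insert M \<Gamma>)"
    using assms(2) by simp
  have "card (?S - \<Gamma>) + 1 \<le> card ?S"
  proof -
    have "\<Gamma> \<subseteq> ?S" "finite ?S" "0 < card \<Gamma>"
      using subset_St [of "insert M \<Gamma>"] finite_St [OF fin] False assms(2)
      by (auto simp: card_gt_0_iff)
    then show ?thesis
      using card_mono [of ?S \<Gamma>] card_Diff_subset [OF assms(2)] by simp
  qed
  moreover obtain m where "lder ar ac R \<Gamma> M m" "m \<le> card (?S - \<Gamma>) + 1"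
    using lder_length_le_card_St_Diff [OF assms(3) fin subset_St] by blast
  ultimately show ?thesis
    by (meson le_trans)
qed

end
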